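(* Let $k\ge 2$, let $H$ be a digraph (possibly with loops), and let $D$ be an $H$-colored local out-tournament. If every directed cycle in $D$ has $H$-length at most $k-2$, then $D$ has a $(k,H)$-kernel.
   Context: All digraphs are finite. A local out-tournament is a digraph $D$ such that for every vertex $x$, the subdigraph induced by the out-neighbourhood $N^+(x)$ is a tournament (every two distinct vertices joined by exactly one arc). $D$ has no loops and comes with a map $\rho: A(D)\to V(H)$. For a walk $W=(x_0,\ldots,x_n)$ in $D$, there is an obstruction on $x_i$ if $(\rho(x_{i-1},x_i),\rho(x_i,x_{i+1})) \notin A(H)$; for an open walk this is considered at internal vertices $x_i$, $1\le i\le n-1$, for a closed walk (such as a cycle) at all $i\in\{0,\ldots,n-1\}$ with indices modulo $n$. $O_H(W)$ is the set of indices with an obstruction; the $H$-length is $l_H(W)=|O_H(W)|+1$ for open $W$ and $|O_H(W)|$ for closed $W$. A $(k,H)$-kernel ($k\ge2$) is a set $S\subseteq V(D)$ such that for every two distinct $u,v\in S$ every directed $uv$-path in $D$ has $H$-length at least $k$, and for every $x\in V(D)\setminus S$ there is a directed path from $x$ to a vertex of $S$ of $H$-length at most $k-1$. *)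

theory Defs
  imports Main
begin

text \<open>A digraph D is given by a vertex set V and an arc set A (a relation, so no
multiple arcs).\<close>

definition digraph :: "'a set \<Rightarrow> ('a \<times> 'a) set \<Rightarrow> bool" where
  "digraph V A \<longleftrightarrow> finite V \<and> A \<subseteq> V \<times> V"

definition loopless :: "('a \<times> 'a) set \<Rightarrow> bool" where
  "loopless A \<longleftrightarrow> (\<forall>x. (x, x) \<notin> A)"

definition local_out_tournament :: "'a set \<Rightarrow> ('a \<times> 'a) set \<Rightarrow> bool" where
  "local_out_tournament V A \<longleftrightarrow>
     (\<forall>x\<in>V. \<forall>u v. (x, u) \<in> A \<and> (x, v) \<in> A \<and> u \<noteq> v \<longrightarrow>
        ((u, v) \<in> A \<longleftrightarrow> (v, u) \<notin> A))"

definition H_coloring :: "('a \<times> 'a) set \<Rightarrow> 'c set \<Rightarrow> ('a \<times> 'a \<Rightarrow> 'c) \<Rightarrow> bool" where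
  "H_coloring A VH rho \<longleftrightarrow> (\<forall>a\<in>A. rho a \<in> VH)"

definition dwalk :: "('a \<times> 'a) set \<Rightarrow> 'a list \<Rightarrow> bool" where
  "dwalk A xs \<longleftrightarrow> xs \<noteq> [] \<and> (\<forall>i. Suc i < length xs \<longrightarrow> (xs ! i, xs ! Suc i) \<in> A)"

definition dpath :: "('a \<times> 'a) set \<Rightarrow> 'a list \<Rightarrow> bool" where
  "dpath A xs \<longleftrightarrow> dwalk A xs \<and> distinct xs"

text \<open>A directed cycle (x0,...,x(n-1),x0) is represented by the list [x0,...,x(n-1)].\<close>
definition dcycle :: "('a \<times> 'a) set \<Rightarrow> 'a list \<Rightarrow> bool" where
  "dcycle A xs \<longleftrightarrow> length xs \<ge> 2 \<and> distinct xs \<and>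
     (\<forall>i < length xs. (xs ! i, xs ! ((i + 1) mod length xs)) \<in> A)"

definition obstructions_open :: "('c \<times> 'c) set \<Rightarrow> ('a \<times> 'a \<Rightarrow> 'c) \<Rightarrow> 'a list \<Rightarrow> nat set" where
  "obstructions_open AH rho xs =
     {i. 1 \<le> i \<and> Suc i < length xs \<and>
         (rho (xs ! (i - 1), xs ! i), rho (xs ! i, xs ! Suc i)) \<notin> AH}"

definition H_length_open :: "('c \<times> 'c) set \<Rightarrow> ('a \<times> 'a \<Rightarrow> 'c) \<Rightarrow> 'a list \<Rightarrow> nat" where
  "H_length_open AH rho xs = card (obstructions_open AH rho xs) + 1"

definition obstructions_closed :: "('c \<times> 'c) set \<Rightarrow> ('a \<times> 'a \<Rightarrow> 'c) \<Rightarrow> 'a list \<Rightarrow> nat set" where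
  "obstructions_closed AH rho xs =
     (let n = length xs in
      {i. i < n \<and>
         (rho (xs ! ((i + n - 1) mod n), xs ! i), rho (xs ! i, xs ! ((i + 1) mod n))) \<notin> AH})"

definition H_length_closed :: "('c \<times> 'c) set \<Rightarrow> ('a \<times> 'a \<Rightarrow> 'c) \<Rightarrow> 'a list \<Rightarrow> nat" where
  "H_length_closed AH rho xs = card (obstructions_closed AH rho xs)"

definition kH_kernel ::
  "'a set \<Rightarrow> ('a \<times> 'a) set \<Rightarrow> ('c \<times> 'c) set \<Rightarrow> ('a \<times> 'a \<Rightarrow> 'c) \<Rightarrow> nat \<Rightarrow> 'a set \<Rightarrow> bool" where
  "kH_kernel V A AH rho k S \<longleftrightarrow> S \<subseteq> V \<and>
     (\<forall>u\<in>S. \<forall>v\<in>S. u \<noteq> v \<longrightarrow>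
        (\<forall>p. dpath A p \<and> hd p = u \<and> last p = v \<longrightarrow> H_length_open AH rho p \<ge> k)) \<and>
     (\<forall>x\<in>V - S. \<exists>p. dpath A p \<and> hd p = x \<and> last p \<in> S \<and> H_length_open AH rho p \<le> k - 1)"

end

theory Submission
  imports Defs
begin

text \<open>Let x \<rightarrow> y mean that some path from x to y has H-length at most k - 1. This relation
has a kernel as soon as every nonempty set U of vertices contains a vertex x such that every
y \<in> U with x \<rightarrow> y also satisfies y \<rightarrow> x. Choose x \<in> U with the largest number of ancestors
in U: then every y \<in> U reachable from x also reaches x. In a local out-tournament two such
vertices lie on a common directed cycle, since a longest cycle through x missing y could be
extended; and the segment of that cycle from y to x has H-length at most the H-length of the
cycle plus one, which is at most k - 1. Only the arcs of H matter.\<close>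

lemma finite_kernel_of_relation:
  assumes "finite W"
    and "\<And>U. U \<subseteq> W \<Longrightarrow> U \<noteq> {} \<Longrightarrow> \<exists>x\<in>U. \<forall>y\<in>U. R x y \<longrightarrow> R y x"
  shows "\<exists>S\<subseteq>W. (\<forall>u\<in>S. \<forall>v\<in>S. u \<noteq> v \<longrightarrow> \<not> R u v) \<and> (\<forall>x\<in>W - S. \<exists>s\<in>S. R x s)"
  using assms
proof (induction W rule: finite_psubset_induct)
  case (psubset W)
  show ?case
  proof (cases "W = {}")
    case False
    from psubset.prems[OF subset_refl False]
    obtain x where x: "x \<in> W" "\<And>y. y \<in> W \<Longrightarrow> R x y \<Longrightarrow> R y x"
      by blast
    define W' where "W' = W - {x} - {y. R y x}"
    have W'_sub: "W' \<subset> W" using x(1) by (auto simp: W'_def)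
    have W'_prop: "\<exists>x\<in>U. \<forall>y\<in>U. R x y \<longrightarrow> R y x" if "U \<subseteq> W'" "U \<noteq> {}" for U
      using that \<open>W' \<subset> W\<close> by (intro psubset.prems) auto
    obtain S' where S': "S' \<subseteq> W'"
      "\<forall>u\<in>S'. \<forall>v\<in>S'. u \<noteq> v \<longrightarrow> \<not> R u v" "\<forall>z\<in>W' - S'. \<exists>s\<in>S'. R z s"
      using psubset.IH[OF W'_sub W'_prop] by blast
    have "\<not> R u x" "\<not> R x u" if "u \<in> S'" for u
      using that S'(1) x(2) by (auto simp: W'_def)
    with S'(2) have "\<forall>u\<in>insert x S'. \<forall>v\<in>insert x S'. u \<noteq> v \<longrightarrow> \<not> R u v"
      by blast
    moreover have "\<forall>z\<in>W - insert x S'. \<exists>s\<in>insert x S'. R z s"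
      using S'(3) by (auto simp: W'_def)
    moreover have "insert x S' \<subseteq> W" using S'(1) x(1) W'_sub by auto
    ultimately show ?thesis by blast
  qed simp
qed

lemma finite_rtrancl_terminal_element:
  assumes "finite U" "U \<noteq> {}"
  shows "\<exists>x\<in>U. \<forall>y\<in>U. (x, y) \<in> A\<^sup>* \<longrightarrow> (y, x) \<in> A\<^sup>*"
proof -
  define ancestors where "ancestors z = {w \<in> U. (w, z) \<in> A\<^sup>*}" for z
  obtain x where x: "x \<in> U" "\<And>y. y \<in> U \<Longrightarrow> card (ancestors y) \<le> card (ancestors x)"
  proof -
    obtain x0 where "x0 \<in> U" using assms(2) by blast
    moreover have "card (ancestors z) < Suc (card U)" for z
      using assms(1) card_mono[of U "ancestors z"] by (auto simp: ancestors_def)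
    ultimately show thesis
      using that ex_has_greatest_nat[of "\<lambda>z. z \<in> U" x0 "\<lambda>z. card (ancestors z)"] by blast
  qed
  have "(y, x) \<in> A\<^sup>*" if "y \<in> U" "(x, y) \<in> A\<^sup>*" for y
  proof -
    have sub: "ancestors x \<subseteq> ancestors y"
      using that(2) by (auto simp: ancestors_def)
    have fin: "finite (ancestors y)"
      using assms(1) by (simp add: ancestors_def)
    with sub x(2)[OF that(1)] have "ancestors x = ancestors y"
      using card_mono card_subset_eq le_antisym by metis
    with that(1) show ?thesis by (auto simp: ancestors_def)
  qed
  with x(1) show ?thesis by blast
qed

lemma dwalk_iff_successively: "dwalk A xs \<longleftrightarrow> xs \<noteq> [] \<and> successively (in_rel A) xs"
  unfolding dwalk_def successively_conv_nth by auto

lemma dwalk_imp_rtrancl: "dwalk A p \<Longrightarrow> (hd p, last p) \<in> A\<^sup>*"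
proof (induction p rule: induct_list012)
  case (3 a b p)
  then show ?case
    by (auto simp: dwalk_iff_successively intro: converse_rtrancl_into_rtrancl)
qed (auto simp: dwalk_def)

lemma rtrancl_imp_dpath_first_hit:
  assumes "(a, b) \<in> A\<^sup>*" "b \<in> X"
  shows "\<exists>p. dpath A p \<and> hd p = a \<and> last p \<in> X \<and> set (butlast p) \<inter> X = {}"
  using assms
proof (induction rule: converse_rtrancl_induct)
  case base
  then show ?case by (auto intro!: exI[of _ "[b]"] simp: dpath_def dwalk_def)
next
  case (step y z)
  then obtain p where p: "dpath A p" "hd p = z" "last p \<in> X" "set (butlast p) \<inter> X = {}"
    by blast
  consider "y \<in> X" | "y \<notin> X" "y \<in> set p" | "y \<notin> X" "y \<notin> set p" by blast
  then show ?case
  proof cases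
    case 1
    then show ?thesis by (auto intro!: exI[of _ "[y]"] simp: dpath_def dwalk_def)
  next
    case 2
    then obtain as bs where p_split: "p = as @ y # bs" by (auto simp: in_set_conv_decomp)
    with 2 p have "bs \<noteq> []" by auto
    with p p_split have "dpath A (y # bs)" "set (butlast (y # bs)) \<subseteq> set (butlast p)"
      by (auto simp: dpath_def dwalk_iff_successively successively_append_iff butlast_append)
    with p p_split \<open>bs \<noteq> []\<close> show ?thesis by (intro exI[of _ "y # bs"]) auto
  next
    case 3
    with p step.hyps(1) show ?thesis
      by (intro exI[of _ "y # p"])
        (auto simp: dpath_def dwalk_iff_successively successively_Cons)
  qed
qed

lemma rtrancl_exit_arc:
  assumes "(a, b) \<in> A\<^sup>*" "a \<in> X" "b \<notin> X"
  shows "\<exists>c v. c \<in> X \<and> v \<notin> X \<and> (c, v) \<in> A \<and> (v, b) \<in> A\<^sup>*"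
  using assms
proof (induction rule: converse_rtrancl_induct)
  case (step y z)
  then show ?case by (cases "z \<in> X") auto
qed simp

lemma dcycle_iff_dpath: "dcycle A C \<longleftrightarrow> dpath A C \<and> 2 \<le> length C \<and> (last C, hd C) \<in> A"
proof (cases "2 \<le> length C")
  case True
  define m where "m = length C - 1"
  with True have m: "length C = Suc m" "0 < m" by auto
  then have "last C = C ! m" "hd C = C ! 0"
    by (auto simp: last_conv_nth hd_conv_nth simp flip: length_greater_0_conv)
  moreover have "Suc i mod Suc m = Suc i" if "i < m" for i
    using that by simp
  ultimately show ?thesis
    using m unfolding dcycle_def dpath_def dwalk_def
    by (auto simp: less_Suc_eq all_conj_distrib) (metis Suc_lessI)
qed (auto simp: dcycle_def)

lemma dcycle_rotate1:
  assumes "dcycle A C"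
  shows "dcycle A (rotate1 C)"
proof (cases C)
  case (Cons a xs)
  with assms have "xs \<noteq> []" by (auto simp: dcycle_def)
  with assms Cons show ?thesis
    by (auto simp: dcycle_iff_dpath dpath_def dwalk_iff_successively successively_append_iff
        successively_Cons)
qed (use assms in \<open>simp add: dcycle_def\<close>)

lemma dcycle_rotate: "dcycle A C \<Longrightarrow> dcycle A (rotate n C)"
  by (induction n) (auto intro: dcycle_rotate1)

lemma dcycle_swap_append: "dcycle A (xs @ ys) \<Longrightarrow> dcycle A (ys @ xs)"
  using dcycle_rotate[of A "xs @ ys" "length xs"] by (simp add: rotate_append)

lemma dcycle_rotate_to:
  assumes "dcycle A C" "w \<in> set C"
  obtains R where "dcycle A R" "hd R = w" "set R = set C" "length R = length C"
proof -
  obtain i where i: "i < length C" "C ! i = w" using assms(2) by (auto simp: in_set_conv_nth)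
  then have "C \<noteq> []" by auto
  with i have "hd (rotate i C) = w" by (simp add: hd_rotate_conv_nth)
  with assms(1) show ?thesis by (intro that[of "rotate i C"]) (simp_all add: dcycle_rotate)
qed

lemma dcycle_length_le_card:
  assumes "A \<subseteq> V \<times> V" "finite V" "dcycle A C"
  shows "length C \<le> card V"
proof -
  have "set C \<subseteq> V"
  proof
    fix z assume "z \<in> set C"
    then obtain i where "i < length C" "z = C ! i" by (auto simp: in_set_conv_nth)
    with assms show "z \<in> V" unfolding dcycle_def by blast
  qed
  then show ?thesis
    using assms card_mono distinct_card unfolding dcycle_def by metis
qed

lemma dcycle_append_path:
  assumes "dcycle A C" "dpath A (qs @ [hd C])" "qs \<noteq> []"
    and "set qs \<inter> set C = {}" "(last C, hd qs) \<in> A"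
  shows "dcycle A (C @ qs)"
  using assms
  by (auto simp: dcycle_iff_dpath dpath_def dwalk_iff_successively successively_append_iff)

lemma dcycle_through_arc:
  assumes "(x, w) \<in> A" "(w, x) \<in> A\<^sup>*" "w \<noteq> x"
  shows "\<exists>C. dcycle A C \<and> x \<in> set C"
proof -
  obtain p where p: "dpath A p" "hd p = w" "last p = x"
    using rtrancl_imp_dpath_first_hit[OF assms(2), of "{x}"] by auto
  have "2 \<le> length p"
  proof (rule ccontr)
    assume "\<not> 2 \<le> length p"
    with p(1) obtain a where "p = [a]"
      by (cases p) (auto simp: dpath_def dwalk_def Suc_le_eq)
    with p assms(3) show False by simp
  qed
  with p assms(1) have "dcycle A p" by (simp add: dcycle_iff_dpath)
  moreover from p have "x \<in> set p" by (auto simp: dpath_def dwalk_def)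
  ultimately show ?thesis by blast
qed

lemma local_out_tournament_walk_dominated:
  assumes lot: "local_out_tournament V A" and AV: "A \<subseteq> V \<times> V"
    and zs: "dwalk A zs" "(hd zs, v) \<in> A" "v \<notin> set zs"
    and no_insert: "\<nexists>i. Suc i < length zs \<and> (zs ! i, v) \<in> A \<and> (v, zs ! Suc i) \<in> A"
  shows "\<forall>z\<in>set zs. (z, v) \<in> A"
proof (rule ccontr)
  assume "\<not> (\<forall>z\<in>set zs. (z, v) \<in> A)"
  then obtain n where "n < length zs" "(zs ! n, v) \<notin> A" by (auto simp: in_set_conv_nth)
  moreover have "(zs ! 0, v) \<in> A" using zs by (simp add: dwalk_def hd_conv_nth)
  ultimately obtain i where i: "i < n" "(zs ! i, v) \<in> A" "(zs ! Suc i, v) \<notin> A"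
    using ex_least_nat_less[of "\<lambda>i. (zs ! i, v) \<notin> A" n] by auto
  with \<open>n < length zs\<close> have "Suc i < length zs" by simp
  with zs have "(zs ! i, zs ! Suc i) \<in> A" "zs ! Suc i \<noteq> v" by (auto simp: dwalk_def)
  with lot AV i(2,3) have "(v, zs ! Suc i) \<in> A"
    unfolding local_out_tournament_def by blast
  with no_insert i(2) \<open>Suc i < length zs\<close> show False by blast
qed

text \<open>Either v fits between two consecutive vertices of the cycle, or,
propagating (c, v) \<in> A along the cycle by the local out-tournament property, every vertex of C
dominates v; then a path from v back to C, entering C only at its end, closes a longer cycle.\<close>

lemma local_out_tournament_dcycle_grow:
  assumes lot: "local_out_tournament V A" and AV: "A \<subseteq> V \<times> V" and C: "dcycle A C"
    and c: "c \<in> set C" "(c, v) \<in> A" and v: "v \<notin> set C"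
    and reach: "(v, z) \<in> A\<^sup>*" "z \<in> set C"
  shows "\<exists>C'. dcycle A C' \<and> set C \<subseteq> set C' \<and> length C < length C'"
proof -
  obtain R where R: "dcycle A R" "hd R = c" "set R = set C" "length R = length C"
    using dcycle_rotate_to[OF C c(1)] .
  show ?thesis
  proof (cases "\<exists>i. Suc i < length R \<and> (R ! i, v) \<in> A \<and> (v, R ! Suc i) \<in> A")
    case True
    then obtain i where i: "Suc i < length R" "(R ! i, v) \<in> A" "(v, R ! Suc i) \<in> A" by blast
    define xs where "xs = take (Suc i) R"
    define ys where "ys = drop (Suc i) R"
    have R_split: "R = xs @ ys" by (simp add: xs_def ys_def)
    have ys: "ys \<noteq> []" "hd ys = R ! Suc i"
      using i(1) by (simp_all add: ys_def hd_drop_conv_nth)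
    have xs: "xs \<noteq> []" "last xs = R ! i"
      using i(1) by (simp_all add: xs_def take_Suc_conv_app_nth)
    from R(1) R_split have "dcycle A (ys @ xs)" by (simp add: dcycle_swap_append)
    moreover have "v \<notin> set (ys @ xs)" using v R(3) R_split by auto
    ultimately have "dcycle A (ys @ xs @ [v])"
      using dcycle_append_path[of A "ys @ xs" "[v]"] i(2,3) xs ys hd_in_set[OF ys(1)]
      by (auto simp: dpath_def dwalk_iff_successively)
    with R(3,4) R_split show ?thesis by (intro exI[of _ "ys @ xs @ [v]"]) auto
  next
    case False
    have dominated: "\<forall>u\<in>set C. (u, v) \<in> A"
      using local_out_tournament_walk_dominated[OF lot AV _ _ _ False] R c(2) v
      by (simp add: dcycle_iff_dpath dpath_def)
    obtain p where p: "dpath A p" "hd p = v" "last p \<in> set C" "set (butlast p) \<inter> set C = {}"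
      using rtrancl_imp_dpath_first_hit[OF reach] by blast
    then obtain qs w where p_split: "p = qs @ [w]"
      by (metis dpath_def dwalk_def rev_exhaust)
    with p v have qs: "qs \<noteq> []" "hd qs = v" "w \<in> set C" "set qs \<inter> set C = {}"
      by (auto simp: hd_append split: if_splits)
    obtain R' where R': "dcycle A R'" "hd R' = w" "set R' = set C" "length R' = length C"
      using dcycle_rotate_to[OF C qs(3)] .
    have "last R' \<in> set C"
      using R'(1,3) by (metis dcycle_iff_dpath dpath_def dwalk_def last_in_set)
    with dominated qs(2) have "(last R', hd qs) \<in> A" by simp
    with R' qs p(1) p_split have "dcycle A (R' @ qs)" by (intro dcycle_append_path) auto
    with R' qs(1) show ?thesis by (intro exI[of _ "R' @ qs"]) auto
  qed
qed

lemma local_out_tournament_strong_pair_on_dcycle: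
  assumes lot: "local_out_tournament V A" and AV: "A \<subseteq> V \<times> V" and fin: "finite V"
    and ll: "loopless A" and xy: "x \<noteq> y" "(x, y) \<in> A\<^sup>*" "(y, x) \<in> A\<^sup>*"
  shows "\<exists>C. dcycle A C \<and> x \<in> set C \<and> y \<in> set C"
proof -
  obtain w where w: "(x, w) \<in> A" "(w, y) \<in> A\<^sup>*"
    using xy(2,1) by (cases rule: converse_rtranclE) auto
  moreover have "w \<noteq> x" using w(1) ll by (auto simp: loopless_def)
  ultimately obtain C0 where "dcycle A C0" "x \<in> set C0"
    using dcycle_through_arc[of x w A] xy(3) by (meson rtrancl_trans)
  then obtain C where C: "dcycle A C" "x \<in> set C"
    and longest: "\<And>C'. dcycle A C' \<Longrightarrow> x \<in> set C' \<Longrightarrow> length C' \<le> length C"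
    using ex_has_greatest_nat[of "\<lambda>C. dcycle A C \<and> x \<in> set C" C0 length "Suc (card V)"]
      dcycle_length_le_card[OF AV fin] by (metis less_Suc_eq_le)
  show ?thesis
  proof (rule ccontr)
    assume "\<nexists>C. dcycle A C \<and> x \<in> set C \<and> y \<in> set C"
    with C have "y \<notin> set C" by blast
    then obtain c v where cv: "c \<in> set C" "v \<notin> set C" "(c, v) \<in> A" "(v, y) \<in> A\<^sup>*"
      using rtrancl_exit_arc[OF xy(2) C(2)] by blast
    with xy(3) have "(v, x) \<in> A\<^sup>*" by simp
    then obtain C' where "dcycle A C'" "set C \<subseteq> set C'" "length C < length C'"
      using local_out_tournament_dcycle_grow[OF lot AV C(1) cv(1,3,2)] C(2) by blast
    with longest C(2) show False by fastforce
  qed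
qed

lemma obstructions_open_take_subset:
  "obstructions_open AH rho (take j xs) \<subseteq> obstructions_open AH rho xs"
  by (auto simp: obstructions_open_def)

lemma obstructions_open_subset_closed:
  "obstructions_open AH rho xs \<subseteq> obstructions_closed AH rho xs"
proof
  fix i assume i: "i \<in> obstructions_open AH rho xs"
  then obtain j where "i = Suc j" "Suc i < length xs"
    by (auto simp: obstructions_open_def Suc_le_eq dest: gr0_implies_Suc)
  then have "(i + length xs - 1) mod length xs = i - 1" "(i + 1) mod length xs = Suc i"
    by simp_all
  with i show "i \<in> obstructions_closed AH rho xs"
    by (auto simp: obstructions_open_def obstructions_closed_def Let_def)
qed

lemma H_length_open_take_le_closed:
  "H_length_open AH rho (take j xs) \<le> H_length_closed AH rho xs + 1"
proof -
  have "finite (obstructions_closed AH rho xs)" by (simp add: obstructions_closed_def Let_def)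
  then show ?thesis
    unfolding H_length_open_def H_length_closed_def
    using obstructions_open_take_subset obstructions_open_subset_closed
    by (metis add_right_mono card_mono order_trans)
qed

definition H_reaches ::
  "('a \<times> 'a) set \<Rightarrow> ('c \<times> 'c) set \<Rightarrow> ('a \<times> 'a \<Rightarrow> 'c) \<Rightarrow> nat \<Rightarrow> 'a \<Rightarrow> 'a \<Rightarrow> bool" where
  "H_reaches A AH rho l x y \<longleftrightarrow>
     (\<exists>p. dpath A p \<and> hd p = x \<and> last p = y \<and> H_length_open AH rho p \<le> l)"

lemma H_reaches_imp_rtrancl: "H_reaches A AH rho l x y \<Longrightarrow> (x, y) \<in> A\<^sup>*"
  unfolding H_reaches_def dpath_def using dwalk_imp_rtrancl by blast

lemma kH_kernel_iff_H_reaches: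
  "kH_kernel V A AH rho k S \<longleftrightarrow> S \<subseteq> V \<and>
     (\<forall>u\<in>S. \<forall>v\<in>S. u \<noteq> v \<longrightarrow> \<not> H_reaches A AH rho (k - 1) u v) \<and>
     (\<forall>x\<in>V - S. \<exists>s\<in>S. H_reaches A AH rho (k - 1) x s)"
proof -
  have "k \<le> H_length_open AH rho p \<longleftrightarrow> \<not> H_length_open AH rho p \<le> k - 1" for p
    by (auto simp: H_length_open_def)
  then show ?thesis unfolding kH_kernel_def H_reaches_def by blast
qed

lemma dcycle_H_reaches:
  assumes short: "\<forall>C. dcycle A C \<longrightarrow> H_length_closed AH rho C \<le> b"
    and C: "dcycle A C" "x \<in> set C" "y \<in> set C"
  shows "H_reaches A AH rho (b + 1) x y"
proof -
  obtain R where R: "dcycle A R" "hd R = x" "set R = set C"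
    using dcycle_rotate_to[OF C(1,2)] by metis
  from R(3) C(3) have "y \<in> set R" by simp
  then obtain m where m: "m < length R" "R ! m = y" by (auto simp: in_set_conv_nth)
  have "dpath A (take (Suc m) R)"
    using R(1) by (auto simp: dcycle_iff_dpath dpath_def dwalk_def)
  moreover have "hd (take (Suc m) R) = x" using R(2) by simp
  moreover have "last (take (Suc m) R) = y" using m by (simp add: take_Suc_conv_app_nth)
  moreover have "H_length_open AH rho (take (Suc m) R) \<le> b + 1"
    using H_length_open_take_le_closed[of AH rho "Suc m" R] short R(1) by fastforce
  ultimately show ?thesis unfolding H_reaches_def by blast
qed

lemma local_out_tournament_strong_pair_H_reaches:
  assumes "local_out_tournament V A" "A \<subseteq> V \<times> V" "finite V" "loopless A"
    and short: "\<forall>C. dcycle A C \<longrightarrow> H_length_closed AH rho C \<le> b"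
    and "(x, y) \<in> A\<^sup>*" "(y, x) \<in> A\<^sup>*"
  shows "H_reaches A AH rho (b + 1) x y"
proof (cases "x = y")
  case True
  then show ?thesis
    unfolding H_reaches_def
    by (intro exI[of _ "[x]"]) (simp add: dpath_def dwalk_def H_length_open_def obstructions_open_def)
next
  case False
  with assms obtain C where "dcycle A C" "x \<in> set C" "y \<in> set C"
    using local_out_tournament_strong_pair_on_dcycle by metis
  with short show ?thesis by (rule dcycle_H_reaches)
qed

lemma local_out_tournament_H_reaches_terminal_element:
  assumes "local_out_tournament V A" "A \<subseteq> V \<times> V" "finite V" "loopless A"
    and "\<forall>C. dcycle A C \<longrightarrow> H_length_closed AH rho C \<le> b"
    and U: "U \<subseteq> V" "U \<noteq> {}"
  shows "\<exists>x\<in>U. \<forall>y\<in>U. H_reaches A AH rho (b + 1) x y \<longrightarrow> H_reaches A AH rho (b + 1) y x"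
proof -
  from U(1) \<open>finite V\<close> have "finite U" by (rule finite_subset)
  then obtain x where "x \<in> U" and terminal: "\<forall>y\<in>U. (x, y) \<in> A\<^sup>* \<longrightarrow> (y, x) \<in> A\<^sup>*"
    using finite_rtrancl_terminal_element[of U A] U(2) by blast
  have "H_reaches A AH rho (b + 1) y x" if "y \<in> U" "H_reaches A AH rho (b + 1) x y" for y
  proof -
    from that(2) have "(x, y) \<in> A\<^sup>*" by (rule H_reaches_imp_rtrancl)
    with terminal that(1) have "(y, x) \<in> A\<^sup>*" by blast
    from assms(1-5) this \<open>(x, y) \<in> A\<^sup>*\<close> show ?thesis
      by (rule local_out_tournament_strong_pair_H_reaches)
  qed
  with \<open>x \<in> U\<close> show ?thesis by blast
qed

theorem theorem28:
  fixes V :: "'a set" and A :: "('a \<times> 'a) set"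
    and VH :: "'c set" and AH :: "('c \<times> 'c) set"
    and rho :: "'a \<times> 'a \<Rightarrow> 'c" and k :: nat
  assumes "k \<ge> 2"
    and "digraph V A" and "loopless A"
    and "AH \<subseteq> VH \<times> VH"
    and "H_coloring A VH rho"
    and "local_out_tournament V A"
    and "\<forall>C. dcycle A C \<longrightarrow> H_length_closed AH rho C \<le> k - 2"
  shows "\<exists>S. kH_kernel V A AH rho k S"
proof -
  have fin: "finite V" and AV: "A \<subseteq> V \<times> V" using assms(2) by (auto simp: digraph_def)
  from assms(1) have "k - 1 = k - 2 + 1" by simp
  then have "\<exists>x\<in>U. \<forall>y\<in>U. H_reaches A AH rho (k - 1) x y \<longrightarrow> H_reaches A AH rho (k - 1) y x"
    if "U \<subseteq> V" "U \<noteq> {}" for U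
    using local_out_tournament_H_reaches_terminal_element[OF assms(6) AV fin assms(3,7) that]
    by simp
  then obtain S where "S \<subseteq> V" "\<forall>u\<in>S. \<forall>v\<in>S. u \<noteq> v \<longrightarrow> \<not> H_reaches A AH rho (k - 1) u v"
    "\<forall>x\<in>V - S. \<exists>s\<in>S. H_reaches A AH rho (k - 1) x s"
    using finite_kernel_of_relation[OF fin, of "H_reaches A AH rho (k - 1)"] by blast
  then show ?thesis by (auto simp: kH_kernel_iff_H_reaches)
qed

end
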